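(* For every integer $d\ge 2$, $$2^{-d}+\frac{(2^d-1)\left(2^d-2+\sqrt{(2^d-2)^2+2^{d+3}d}\right)}{2^{2d+1}d}>\frac{3}{2^d+2}.$$ *)

theory Defs
  imports Complex_Main
begin

end

theory Submission
  imports Defs
begin

text \<open>Write \<open>N = 2^d\<close> and \<open>S = sqrt ((N - 2)^2 + 8 N d)\<close>. Since \<open>3/(N + 2) - 1/N = 2(N - 1)/(N(N + 2))\<close>,
  the claim reduces to \<open>(N - 2 + S)(N + 2) > 4 N d\<close>, i.e. \<open>S > t\<close> with \<open>t = 4 N d/(N + 2) - (N - 2)\<close>.
  This holds because \<open>S^2 - t^2 = 16 N^2 d (N + 2 - d)/(N + 2)^2\<close>, which is positive as soon as
  \<open>0 < d < N + 2\<close>; for \<open>N = 2^d\<close> this is just \<open>d < 2^d\<close>.\<close>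

lemma sqrt_discriminant_bound:
  fixes N d :: real
  assumes "N > 0" and "d > 0" and "d < N + 2"
  shows "4 * N * d < (N - 2 + sqrt ((N - 2)\<^sup>2 + 8 * N * d)) * (N + 2)"
proof -
  define t where "t = 4 * N * d / (N + 2) - (N - 2)"
  have "t = (4 * N * d - (N - 2) * (N + 2)) / (N + 2)"
    unfolding t_def using assms(1) by (simp add: field_simps)
  then have "t\<^sup>2 = (4 * N * d - (N - 2) * (N + 2))\<^sup>2 / (N + 2)\<^sup>2"
    by (simp add: power_divide)
  then have "(N - 2)\<^sup>2 + 8 * N * d - t\<^sup>2 = 16 * N\<^sup>2 * d * (N + 2 - d) / (N + 2)\<^sup>2"
    using assms(1) by (simp add: divide_simps) (simp add: power2_eq_square algebra_simps)
  also have "\<dots> > 0"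
    using assms by simp
  finally have "t < sqrt ((N - 2)\<^sup>2 + 8 * N * d)"
    by (intro real_less_rsqrt) simp
  then have "4 * N * d / (N + 2) < N - 2 + sqrt ((N - 2)\<^sup>2 + 8 * N * d)"
    unfolding t_def by linarith
  then show ?thesis
    using assms(1) by (simp add: field_simps)
qed

lemma proposition2_real:
  fixes N d :: real
  assumes "N > 1" and "d > 0" and "d < N + 2"
  shows "3 / (N + 2) < 1 / N + (N - 1) * (N - 2 + sqrt ((N - 2)\<^sup>2 + 8 * N * d)) / (2 * N\<^sup>2 * d)"
proof -
  define S where "S = sqrt ((N - 2)\<^sup>2 + 8 * N * d)"
  have "4 * N * d < (N - 2 + S) * (N + 2)"
    unfolding S_def using assms by (intro sqrt_discriminant_bound) auto
  then have "N * (N - 1) * (4 * N * d) < N * (N - 1) * ((N - 2 + S) * (N + 2))"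
    using assms(1) by (intro mult_strict_left_mono) auto
  then have "2 * (N - 1) * (2 * N\<^sup>2 * d) < (N - 1) * (N - 2 + S) * (N * (N + 2))"
    by (simp add: algebra_simps power2_eq_square)
  then have "2 * (N - 1) / (N * (N + 2)) < (N - 1) * (N - 2 + S) / (2 * N\<^sup>2 * d)"
    using assms by (simp add: divide_simps)
  moreover have "3 / (N + 2) - 1 / N = 2 * (N - 1) / (N * (N + 2))"
    using assms(1) by (simp add: field_simps)
  ultimately show ?thesis
    unfolding S_def by linarith
qed

theorem proposition2:
  fixes d :: nat
  assumes "d \<ge> 2"
  shows "1 / 2 ^ d + (2 ^ d - 1) * (2 ^ d - 2 + sqrt ((2 ^ d - 2)\<^sup>2 + 2 ^ (d + 3) * real d))
           / (2 ^ (2 * d + 1) * real d) > 3 / (2 ^ d + (2::real))"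
proof -
  have d_less: "real d < 2 ^ d"
    by (metis less_exp of_nat_less_numeral_power_cancel_iff)
  have "3 / (2 ^ d + 2) < 1 / 2 ^ d + (2 ^ d - 1) * (2 ^ d - 2 + sqrt ((2 ^ d - 2)\<^sup>2 + 8 * 2 ^ d * real d))
      / (2 * (2 ^ d)\<^sup>2 * real d)"
  proof (rule proposition2_real)
    show "(2::real) ^ d > 1" and "real d > 0"
      using assms by simp_all
    show "real d < 2 ^ d + 2"
      using d_less by linarith
  qed
  moreover have "(2::real) ^ (d + 3) = 8 * 2 ^ d" and "(2::real) ^ (2 * d + 1) = 2 * (2 ^ d)\<^sup>2"
    by (simp_all add: power_add power_mult power2_eq_square mult_ac)
  ultimately show ?thesis
    by simp
qed

end
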